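(* For any first-order $\mathscr L$-theory $T$, the following are equivalent: (1) $T$ is model-complete; (2) $T^*$ is positively model-complete; (3) $T^*$ is geometrically complete.
   Context: $\mathscr L^*$ is $\mathscr L$ plus, for each relation symbol $R$ of $\mathscr L$, a new relation symbol $R^*$ of the same arity; $T^*$ (the atomic Morleyisation of $T$) is $T$ together with all axioms $\forall\bar x(\neg R(\bar x)\leftrightarrow R^*(\bar x))$. $T$ is model-complete if every embedding between models of $T$ is existentially closed (reflects existential sentences with parameters). A homomorphism preserves atomic sentences with parameters; it is an immersion if it reflects every positive existential (prenex existential, negation-free) sentence with parameters; a theory is positively model-complete if every homomorphism between its models is an immersion. A homomorphism $f:A\to B$ is geometrically closed if every sentence $\forall\bar y\,(\bigwedge\Phi(\bar a,\bar y)\to\psi(\bar a,\bar y))$ ($\Phi\cup\{\psi\}$ finite sets of atomic formulas, parameters from $A$) true in $A$ holds in $B$ of $f\bar a$; a theory is geometrically complete if every homomorphism between its models is geometrically closed. *)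

theory Defs
  imports Main
begin

record ('f,'r) lang =
  farity :: "'f \<Rightarrow> nat"
  rarity :: "'r \<Rightarrow> nat"

datatype 'f trm = Var nat | Fn 'f "'f trm list"

datatype ('f,'r) fm =
    FT | FF
  | Rel 'r "'f trm list"
  | Eq "'f trm" "'f trm"
  | Neg "('f,'r) fm"
  | Conj "('f,'r) fm" "('f,'r) fm"
  | Disj "('f,'r) fm" "('f,'r) fm"
  | Ex nat "('f,'r) fm"
  | All nat "('f,'r) fm"

definition Imp :: "('f,'r) fm \<Rightarrow> ('f,'r) fm \<Rightarrow> ('f,'r) fm" where
  "Imp a b = Disj (Neg a) b"

definition Iff :: "('f,'r) fm \<Rightarrow> ('f,'r) fm \<Rightarrow> ('f,'r) fm" where
  "Iff a b = Conj (Imp a b) (Imp b a)"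

definition Exs :: "nat list \<Rightarrow> ('f,'r) fm \<Rightarrow> ('f,'r) fm" where
  "Exs xs \<phi> = foldr Ex xs \<phi>"

definition Alls :: "nat list \<Rightarrow> ('f,'r) fm \<Rightarrow> ('f,'r) fm" where
  "Alls xs \<phi> = foldr All xs \<phi>"

definition Conjs :: "('f,'r) fm list \<Rightarrow> ('f,'r) fm" where
  "Conjs \<Phi> = foldr Conj \<Phi> FT"

primrec wf_trm :: "('f,'r) lang \<Rightarrow> 'f trm \<Rightarrow> bool" where
  "wf_trm L (Var n) = True"
| "wf_trm L (Fn f ts) = (length ts = farity L f \<and> list_all (wf_trm L) ts)"

primrec wf_fm :: "('f,'r) lang \<Rightarrow> ('f,'r) fm \<Rightarrow> bool" where
  "wf_fm L FT = True"
| "wf_fm L FF = True"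
| "wf_fm L (Rel R ts) = (length ts = rarity L R \<and> (\<forall>t\<in>set ts. wf_trm L t))"
| "wf_fm L (Eq s t) = (wf_trm L s \<and> wf_trm L t)"
| "wf_fm L (Neg \<phi>) = wf_fm L \<phi>"
| "wf_fm L (Conj \<phi> \<psi>) = (wf_fm L \<phi> \<and> wf_fm L \<psi>)"
| "wf_fm L (Disj \<phi> \<psi>) = (wf_fm L \<phi> \<and> wf_fm L \<psi>)"
| "wf_fm L (Ex x \<phi>) = wf_fm L \<phi>"
| "wf_fm L (All x \<phi>) = wf_fm L \<phi>"

primrec fv_trm :: "'f trm \<Rightarrow> nat set" where
  "fv_trm (Var n) = {n}"
| "fv_trm (Fn f ts) = \<Union> (set (map fv_trm ts))"

primrec fv :: "('f,'r) fm \<Rightarrow> nat set" where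
  "fv FT = {}"
| "fv FF = {}"
| "fv (Rel R ts) = (\<Union>t\<in>set ts. fv_trm t)"
| "fv (Eq s t) = fv_trm s \<union> fv_trm t"
| "fv (Neg \<phi>) = fv \<phi>"
| "fv (Conj \<phi> \<psi>) = fv \<phi> \<union> fv \<psi>"
| "fv (Disj \<phi> \<psi>) = fv \<phi> \<union> fv \<psi>"
| "fv (Ex x \<phi>) = fv \<phi> - {x}"
| "fv (All x \<phi>) = fv \<phi> - {x}"

definition is_theory :: "('f,'r) lang \<Rightarrow> ('f,'r) fm set \<Rightarrow> bool" where
  "is_theory L T = (\<forall>\<phi>\<in>T. wf_fm L \<phi> \<and> fv \<phi> = {})"

fun is_atomic :: "('f,'r) fm \<Rightarrow> bool" where
  "is_atomic (Rel R ts) = True"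
| "is_atomic (Eq s t) = True"
| "is_atomic _ = False"

fun qfree :: "('f,'r) fm \<Rightarrow> bool" where
  "qfree (Ex x \<phi>) = False"
| "qfree (All x \<phi>) = False"
| "qfree (Neg \<phi>) = qfree \<phi>"
| "qfree (Conj \<phi> \<psi>) = (qfree \<phi> \<and> qfree \<psi>)"
| "qfree (Disj \<phi> \<psi>) = (qfree \<phi> \<and> qfree \<psi>)"
| "qfree _ = True"

fun pos_qfree :: "('f,'r) fm \<Rightarrow> bool" where
  "pos_qfree FT = True"
| "pos_qfree FF = True"
| "pos_qfree (Rel R ts) = True"
| "pos_qfree (Eq s t) = True"
| "pos_qfree (Conj \<phi> \<psi>) = (pos_qfree \<phi> \<and> pos_qfree \<psi>)"
| "pos_qfree (Disj \<phi> \<psi>) = (pos_qfree \<phi> \<and> pos_qfree \<psi>)"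
| "pos_qfree _ = False"

definition existential :: "('f,'r) fm \<Rightarrow> bool" where
  "existential \<phi> = (\<exists>xs \<psi>. \<phi> = Exs xs \<psi> \<and> qfree \<psi>)"

definition pos_existential :: "('f,'r) fm \<Rightarrow> bool" where
  "pos_existential \<phi> = (\<exists>xs \<psi>. \<phi> = Exs xs \<psi> \<and> pos_qfree \<psi>)"

record ('a,'f,'r) struc =
  Dom :: "'a set"
  funs :: "'f \<Rightarrow> 'a list \<Rightarrow> 'a"
  rels :: "'r \<Rightarrow> 'a list \<Rightarrow> bool"

definition is_struct :: "('f,'r) lang \<Rightarrow> ('a,'f,'r) struc \<Rightarrow> bool" where
  "is_struct L A = (Dom A \<noteq> {} \<and>
     (\<forall>f as. length as = farity L f \<and> set as \<subseteq> Dom A \<longrightarrow> funs A f as \<in> Dom A))"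

definition asg :: "('a,'f,'r) struc \<Rightarrow> (nat \<Rightarrow> 'a) \<Rightarrow> bool" where
  "asg A v = (\<forall>n. v n \<in> Dom A)"

primrec eval :: "('a,'f,'r) struc \<Rightarrow> (nat \<Rightarrow> 'a) \<Rightarrow> 'f trm \<Rightarrow> 'a" where
  "eval A v (Var n) = v n"
| "eval A v (Fn f ts) = funs A f (map (eval A v) ts)"

primrec sat :: "('a,'f,'r) struc \<Rightarrow> (nat \<Rightarrow> 'a) \<Rightarrow> ('f,'r) fm \<Rightarrow> bool" where
  "sat A v FT = True"
| "sat A v FF = False"
| "sat A v (Rel R ts) = rels A R (map (eval A v) ts)"
| "sat A v (Eq s t) = (eval A v s = eval A v t)"
| "sat A v (Neg \<phi>) = (\<not> sat A v \<phi>)"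
| "sat A v (Conj \<phi> \<psi>) = (sat A v \<phi> \<and> sat A v \<psi>)"
| "sat A v (Disj \<phi> \<psi>) = (sat A v \<phi> \<or> sat A v \<psi>)"
| "sat A v (Ex x \<phi>) = (\<exists>a\<in>Dom A. sat A (v(x := a)) \<phi>)"
| "sat A v (All x \<phi>) = (\<forall>a\<in>Dom A. sat A (v(x := a)) \<phi>)"

definition is_model :: "('f,'r) lang \<Rightarrow> ('f,'r) fm set \<Rightarrow> ('a,'f,'r) struc \<Rightarrow> bool" where
  "is_model L T A = (is_struct L A \<and> (\<forall>\<phi>\<in>T. \<forall>v. asg A v \<longrightarrow> sat A v \<phi>))"

definition embedding :: "('f,'r) lang \<Rightarrow> ('a,'f,'r) struc \<Rightarrow> ('b,'f,'r) struc \<Rightarrow> ('a \<Rightarrow> 'b) \<Rightarrow> bool" where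
  "embedding L A B h = ((\<forall>a\<in>Dom A. h a \<in> Dom B) \<and> inj_on h (Dom A) \<and>
     (\<forall>f as. length as = farity L f \<and> set as \<subseteq> Dom A \<longrightarrow> h (funs A f as) = funs B f (map h as)) \<and>
     (\<forall>R as. length as = rarity L R \<and> set as \<subseteq> Dom A \<longrightarrow> (rels A R as \<longleftrightarrow> rels B R (map h as))))"

definition ec_embedding :: "('f,'r) lang \<Rightarrow> ('a,'f,'r) struc \<Rightarrow> ('b,'f,'r) struc \<Rightarrow> ('a \<Rightarrow> 'b) \<Rightarrow> bool" where
  "ec_embedding L A B h = (embedding L A B h \<and>
     (\<forall>\<phi> v. wf_fm L \<phi> \<and> existential \<phi> \<and> asg A v \<and> sat B (h \<circ> v) \<phi> \<longrightarrow> sat A v \<phi>))"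

definition hom :: "('f,'r) lang \<Rightarrow> ('a,'f,'r) struc \<Rightarrow> ('b,'f,'r) struc \<Rightarrow> ('a \<Rightarrow> 'b) \<Rightarrow> bool" where
  "hom L A B h = ((\<forall>a\<in>Dom A. h a \<in> Dom B) \<and>
     (\<forall>\<phi> v. wf_fm L \<phi> \<and> is_atomic \<phi> \<and> asg A v \<and> sat A v \<phi> \<longrightarrow> sat B (h \<circ> v) \<phi>))"

definition immersion :: "('f,'r) lang \<Rightarrow> ('a,'f,'r) struc \<Rightarrow> ('b,'f,'r) struc \<Rightarrow> ('a \<Rightarrow> 'b) \<Rightarrow> bool" where
  "immersion L A B h = (hom L A B h \<and>
     (\<forall>\<phi> v. wf_fm L \<phi> \<and> pos_existential \<phi> \<and> asg A v \<and> sat B (h \<circ> v) \<phi> \<longrightarrow> sat A v \<phi>))"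

definition geom_closed :: "('f,'r) lang \<Rightarrow> ('a,'f,'r) struc \<Rightarrow> ('b,'f,'r) struc \<Rightarrow> ('a \<Rightarrow> 'b) \<Rightarrow> bool" where
  "geom_closed L A B h = (hom L A B h \<and>
     (\<forall>ys \<Phi> \<psi> v. (\<forall>\<chi>\<in>set \<Phi>. wf_fm L \<chi> \<and> is_atomic \<chi>) \<and> wf_fm L \<psi> \<and> is_atomic \<psi> \<and> asg A v \<and>
        sat A v (Alls ys (Imp (Conjs \<Phi>) \<psi>)) \<longrightarrow> sat B (h \<circ> v) (Alls ys (Imp (Conjs \<Phi>) \<psi>))))"

section \<open>Completeness notions (models with carrier in type 'a)\<close>

definition model_complete :: "('f,'r) lang \<Rightarrow> ('f,'r) fm set \<Rightarrow> 'a itself \<Rightarrow> bool" where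
  "model_complete L T (_::'a itself) = (\<forall>(A::('a,'f,'r) struc) (B::('a,'f,'r) struc) h.
     is_model L T A \<and> is_model L T B \<and> embedding L A B h \<longrightarrow> ec_embedding L A B h)"

definition pos_model_complete :: "('f,'r) lang \<Rightarrow> ('f,'r) fm set \<Rightarrow> 'a itself \<Rightarrow> bool" where
  "pos_model_complete L T (_::'a itself) = (\<forall>(A::('a,'f,'r) struc) (B::('a,'f,'r) struc) h.
     is_model L T A \<and> is_model L T B \<and> hom L A B h \<longrightarrow> immersion L A B h)"

definition geom_complete :: "('f,'r) lang \<Rightarrow> ('f,'r) fm set \<Rightarrow> 'a itself \<Rightarrow> bool" where
  "geom_complete L T (_::'a itself) = (\<forall>(A::('a,'f,'r) struc) (B::('a,'f,'r) struc) h.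
     is_model L T A \<and> is_model L T B \<and> hom L A B h \<longrightarrow> geom_closed L A B h)"

section \<open>Atomic Morleyisation\<close>

text \<open>Equality is treated as a relation symbol of L, so it also receives a starred
  copy StarEq (binary), interpreted as inequality.\<close>
datatype 'r starred = Orig 'r | Star 'r | StarEq

definition star_lang :: "('f,'r) lang \<Rightarrow> ('f,'r starred) lang" where
  "star_lang L = \<lparr>farity = farity L,
     rarity = (\<lambda>S. case S of Orig R \<Rightarrow> rarity L R | Star R \<Rightarrow> rarity L R | StarEq \<Rightarrow> 2)\<rparr>"

definition star_axiom :: "('f,'r) lang \<Rightarrow> 'r \<Rightarrow> ('f,'r starred) fm" where
  "star_axiom L R = (let xs = map Var [0..<rarity L R] in
     Alls [0..<rarity L R] (Iff (Neg (Rel (Orig R) xs)) (Rel (Star R) xs)))"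

definition star_eq_axiom :: "('f,'r starred) fm" where
  "star_eq_axiom = Alls [0,1] (Iff (Neg (Eq (Var 0) (Var 1))) (Rel StarEq [Var 0, Var 1]))"

definition star_theory :: "('f,'r) lang \<Rightarrow> ('f,'r) fm set \<Rightarrow> ('f,'r starred) fm set" where
  "star_theory L T = map_fm id Orig ` T \<union> range (star_axiom L) \<union> {star_eq_axiom}"

end

theory Submission
  imports Defs
begin

text \<open>
  A model of \<open>T\<^sup>*\<close> is the expansion of a model of \<open>T\<close> in which every starred symbol
  names the complement of the corresponding relation (or of equality). Hence homomorphisms
  of models of \<open>T\<^sup>*\<close> are exactly embeddings of models of \<open>T\<close>, and every quantifier-free
  \<open>L\<close>-formula becomes a negation-free \<open>L\<^sup>*\<close>-formula, and conversely; this translates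
  existential closedness into immersion and back. Since moreover the negation of an atomic
  \<open>L\<^sup>*\<close>-formula is atomic in models of \<open>T\<^sup>*\<close>, and falsity is the atomic formula
  \<open>x \<noteq>\<^sup>* x\<close>, the failure of a geometric sequent is a positive existential statement and
  the failure of a positive existential statement is a conjunction of geometric sequents,
  which gives the equivalence of positive model completeness and geometric completeness.
\<close>

definition variant_on :: "('a,'f,'r) struc \<Rightarrow> nat list \<Rightarrow> (nat \<Rightarrow> 'a) \<Rightarrow> (nat \<Rightarrow> 'a) \<Rightarrow> bool" where
  "variant_on A ys v w \<longleftrightarrow> (\<forall>x. x \<notin> set ys \<longrightarrow> w x = v x) \<and> (\<forall>x\<in>set ys. w x \<in> Dom A)"

lemma variant_on_Nil: "variant_on A [] v w \<longleftrightarrow> w = v"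
  by (auto simp: variant_on_def)

lemma variant_on_Cons:
  "variant_on A (y # ys) v w \<longleftrightarrow> (\<exists>a\<in>Dom A. variant_on A ys (v(y := a)) w)"
proof
  assume "variant_on A (y # ys) v w"
  then have "variant_on A ys (v(y := w y)) w" "w y \<in> Dom A"
    by (auto simp: variant_on_def)
  then show "\<exists>a\<in>Dom A. variant_on A ys (v(y := a)) w" by blast
next
  assume "\<exists>a\<in>Dom A. variant_on A ys (v(y := a)) w"
  then obtain a where "a \<in> Dom A" "variant_on A ys (v(y := a)) w" by blast
  then show "variant_on A (y # ys) v w"
    by (cases "y \<in> set ys") (auto simp: variant_on_def)
qed

lemma sat_Exs: "sat A v (Exs ys \<phi>) \<longleftrightarrow> (\<exists>w. variant_on A ys v w \<and> sat A w \<phi>)"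
  by (induction ys arbitrary: v) (auto simp: Exs_def variant_on_Nil variant_on_Cons)

lemma sat_Alls: "sat A v (Alls ys \<phi>) \<longleftrightarrow> (\<forall>w. variant_on A ys v w \<longrightarrow> sat A w \<phi>)"
  by (induction ys arbitrary: v) (auto simp: Alls_def variant_on_Nil variant_on_Cons)

lemma asg_variant_on: "asg A v \<Longrightarrow> variant_on A ys v w \<Longrightarrow> asg A w"
  unfolding asg_def variant_on_def by metis

lemma sat_Alls_asg: "asg A v \<Longrightarrow> sat A v (Alls ys \<phi>) \<Longrightarrow> sat A v \<phi>"
  unfolding sat_Alls variant_on_def asg_def by blast

lemma sat_Conjs [simp]: "sat A v (Conjs \<Phi>) \<longleftrightarrow> (\<forall>\<chi>\<in>set \<Phi>. sat A v \<chi>)"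
  by (induction \<Phi>) (auto simp: Conjs_def)

lemma sat_Imp [simp]: "sat A v (Imp \<phi> \<psi>) \<longleftrightarrow> (sat A v \<phi> \<longrightarrow> sat A v \<psi>)"
  by (simp add: Imp_def)

lemma sat_Iff [simp]: "sat A v (Iff \<phi> \<psi>) \<longleftrightarrow> (sat A v \<phi> \<longleftrightarrow> sat A v \<psi>)"
  by (auto simp: Iff_def)

lemma wf_fm_Exs [simp]: "wf_fm L (Exs xs \<phi>) \<longleftrightarrow> wf_fm L \<phi>"
  by (induction xs) (auto simp: Exs_def)

lemma wf_fm_Conjs [simp]: "wf_fm L (Conjs \<Phi>) \<longleftrightarrow> (\<forall>\<chi>\<in>set \<Phi>. wf_fm L \<chi>)"
  by (induction \<Phi>) (auto simp: Conjs_def)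

lemma pos_qfree_Conjs: "\<forall>\<chi>\<in>set \<Phi>. is_atomic \<chi> \<Longrightarrow> pos_qfree (Conjs \<Phi>)"
proof (induction \<Phi>)
  case (Cons \<chi> \<Phi>)
  then show ?case by (cases \<chi>) (auto simp: Conjs_def)
qed (simp add: Conjs_def)

lemma pos_qfree_imp_qfree: "pos_qfree \<phi> \<Longrightarrow> qfree \<phi>"
  by (induction \<phi>) auto

lemma eval_cong_funs: "funs A = funs B \<Longrightarrow> eval A v t = eval B v t"
  by (induction t) (auto cong: map_cong)

lemma eval_in_Dom: "is_struct L A \<Longrightarrow> asg A v \<Longrightarrow> wf_trm L t \<Longrightarrow> eval A v t \<in> Dom A"
proof (induction t)
  case (Var n)
  then show ?case by (simp add: asg_def)
next
  case (Fn f ts)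
  then have "set (map (eval A v) ts) \<subseteq> Dom A" "length (map (eval A v) ts) = farity L f"
    by (auto simp: list_all_iff)
  then show ?case using Fn.prems(1) by (simp add: is_struct_def)
qed

lemma eval_comp_Var [simp]: "eval A w \<circ> Var = w"
  by (rule ext) simp

lemma asg_fun_upd: "asg A w \<Longrightarrow> a \<in> Dom A \<Longrightarrow> asg A (w(x := a))"
  by (simp add: asg_def)

lemma obtain_asg_prefix:
  assumes "Dom A \<noteq> {}" "set as \<subseteq> Dom A"
  obtains v where "asg A v" "map v [0..<length as] = as"
proof -
  obtain d where d: "d \<in> Dom A" using assms(1) by blast
  let ?v = "\<lambda>i. if i < length as then as ! i else d"
  have "asg A ?v" using d assms(2) by (auto simp: asg_def)
  moreover have "map ?v [0..<length as] = as" by (rule nth_equalityI) auto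
  ultimately show thesis by (rule that)
qed

lemma length_2_conv: "length ts = 2 \<longleftrightarrow> (\<exists>s t. ts = [s, t])"
  by (auto simp: numeral_2_eq_2 length_Suc_conv)

section \<open>Reducts and expansions\<close>

definition reduct :: "('a,'f,'r starred) struc \<Rightarrow> ('a,'f,'r) struc" where
  "reduct B = \<lparr>Dom = Dom B, funs = funs B, rels = (\<lambda>R. rels B (Orig R))\<rparr>"

definition star_expansion :: "('a,'f,'r) struc \<Rightarrow> ('a,'f,'r starred) struc" where
  "star_expansion A = \<lparr>Dom = Dom A, funs = funs A, rels = (\<lambda>S. case S of
       Orig R \<Rightarrow> rels A R
     | Star R \<Rightarrow> (\<lambda>as. \<not> rels A R as)
     | StarEq \<Rightarrow> (\<lambda>as. as ! 0 \<noteq> as ! 1))\<rparr>"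

lemma reduct_simps [simp]:
  "Dom (reduct B) = Dom B" "funs (reduct B) = funs B" "rels (reduct B) R = rels B (Orig R)"
  by (auto simp: reduct_def)

lemma star_expansion_simps [simp]:
  "Dom (star_expansion A) = Dom A" "funs (star_expansion A) = funs A"
  "rels (star_expansion A) (Orig R) = rels A R"
  "rels (star_expansion A) (Star R) as \<longleftrightarrow> \<not> rels A R as"
  "rels (star_expansion A) StarEq as \<longleftrightarrow> as ! 0 \<noteq> as ! 1"
  by (auto simp: star_expansion_def)

lemma eval_reduct [simp]: "eval (reduct B) v = eval B v"
  by (rule ext, rule eval_cong_funs) simp

lemma eval_star_expansion [simp]: "eval (star_expansion A) v = eval A v"
  by (rule ext, rule eval_cong_funs) simp

lemma asg_reduct [simp]: "asg (reduct B) v \<longleftrightarrow> asg B v"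
  by (simp add: asg_def)

lemma asg_star_expansion [simp]: "asg (star_expansion A) v \<longleftrightarrow> asg A v"
  by (simp add: asg_def)

lemma star_lang_simps [simp]:
  "farity (star_lang L) = farity L"
  "rarity (star_lang L) (Orig R) = rarity L R"
  "rarity (star_lang L) (Star R) = rarity L R"
  "rarity (star_lang L) StarEq = 2"
  by (auto simp: star_lang_def)

lemma wf_trm_star_lang [simp]: "wf_trm (star_lang L) t \<longleftrightarrow> wf_trm L t"
  by (induction t) (auto simp: list_all_iff)

lemma is_struct_reduct [simp]: "is_struct L (reduct B) \<longleftrightarrow> is_struct (star_lang L) B"
  by (simp add: is_struct_def)

lemma is_struct_star_expansion [simp]:
  "is_struct (star_lang L) (star_expansion A) \<longleftrightarrow> is_struct L A"
  by (simp add: is_struct_def)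

lemma sat_reduct: "sat (reduct B) v \<phi> \<longleftrightarrow> sat B v (map_fm id Orig \<phi>)"
  by (induction \<phi> arbitrary: v) (auto simp: trm.map_id0)

lemma sat_star_expansion_Orig: "sat (star_expansion A) v (map_fm id Orig \<phi>) \<longleftrightarrow> sat A v \<phi>"
  by (induction \<phi> arbitrary: v) (auto simp: trm.map_id0)

lemma is_model_reduct:
  "is_model (star_lang L) (star_theory L T) B \<Longrightarrow> is_model L T (reduct B)"
  by (auto simp: is_model_def star_theory_def sat_reduct)

lemma is_model_star_expansion:
  assumes "is_model L T A"
  shows "is_model (star_lang L) (star_theory L T) (star_expansion A)"
proof -
  have "sat (star_expansion A) v (star_axiom L R)" for v R
    by (auto simp: star_axiom_def sat_Alls Let_def)
  moreover have "sat (star_expansion A) v star_eq_axiom" for v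
    by (auto simp: star_eq_axiom_def sat_Alls)
  ultimately show ?thesis
    using assms by (auto simp: is_model_def star_theory_def sat_star_expansion_Orig)
qed

lemma is_model_Dom_nonempty: "is_model L T B \<Longrightarrow> Dom B \<noteq> {}"
  by (simp add: is_model_def is_struct_def)

lemma star_model_rels_Star:
  assumes B: "is_model (star_lang L) (star_theory L T) B"
    and as: "length as = rarity L R" "set as \<subseteq> Dom B"
  shows "rels B (Star R) as \<longleftrightarrow> \<not> rels B (Orig R) as"
proof -
  obtain v where v: "asg B v" "map v [0..<length as] = as"
    using obtain_asg_prefix[OF is_model_Dom_nonempty[OF B] as(2)] .
  have "sat B v (star_axiom L R)"
    using B v by (auto simp: is_model_def star_theory_def)
  then have "sat B v (Iff (Neg (Rel (Orig R) (map Var [0..<rarity L R])))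
                          (Rel (Star R) (map Var [0..<rarity L R])))"
    unfolding star_axiom_def Let_def using sat_Alls_asg v(1) by blast
  then show ?thesis using v as by simp
qed

lemma star_model_rels_StarEq:
  assumes B: "is_model (star_lang L) (star_theory L T) B"
    and "a \<in> Dom B" "b \<in> Dom B"
  shows "rels B StarEq [a, b] \<longleftrightarrow> a \<noteq> b"
proof -
  have "set [a, b] \<subseteq> Dom B" using assms(2,3) by simp
  then obtain v where v: "asg B v" "map v [0..<length [a, b]] = [a, b]"
    by (rule obtain_asg_prefix[OF is_model_Dom_nonempty[OF B]])
  have "sat B v star_eq_axiom"
    using B v by (auto simp: is_model_def star_theory_def)
  then have "sat B v (Iff (Neg (Eq (Var 0) (Var 1))) (Rel StarEq [Var 0, Var 1]))"
    unfolding star_eq_axiom_def using sat_Alls_asg v(1) by blast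
  moreover have "v 0 = a" "v 1 = b" using v(2) by (auto simp: upt_rec)
  ultimately show ?thesis by auto
qed

lemma hom_sat_atomic:
  "hom L A B h \<Longrightarrow> wf_fm L \<phi> \<Longrightarrow> is_atomic \<phi> \<Longrightarrow> asg A w \<Longrightarrow> sat A w \<phi> \<Longrightarrow> sat B (h \<circ> w) \<phi>"
  unfolding hom_def by blast

lemma hom_asg: "hom L A B h \<Longrightarrow> asg A v \<Longrightarrow> asg B (h \<circ> v)"
  by (auto simp: hom_def asg_def)

lemma hom_rels:
  fixes L :: "('f,'r) lang"
  assumes h: "hom L A B h" and "Dom A \<noteq> {}"
    and as: "length as = rarity L S" "set as \<subseteq> Dom A" and "rels A S as"
  shows "rels B S (map h as)"
proof -
  obtain v where v: "asg A v" "map v [0..<length as] = as"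
    using obtain_asg_prefix[OF assms(2) as(2)] .
  let ?\<phi> = "Rel S (map Var [0..<length as]) :: ('f,'r) fm"
  have "wf_fm L ?\<phi>" "sat A v ?\<phi>" using as v \<open>rels A S as\<close> by simp_all
  then have "sat B (h \<circ> v) ?\<phi>" by (intro hom_sat_atomic[OF h _ _ v(1)]) simp_all
  moreover have "map (h \<circ> v) [0..<length as] = map h as" using v(2) by (metis map_map)
  ultimately show ?thesis by simp
qed

lemma hom_funs:
  fixes L :: "('f,'r) lang"
  assumes h: "hom L A B h" and A: "is_struct L A"
    and as: "length as = farity L f" "set as \<subseteq> Dom A"
  shows "h (funs A f as) = funs B f (map h as)"
proof -
  have "Dom A \<noteq> {}" "funs A f as \<in> Dom A" using A as by (auto simp: is_struct_def)
  then obtain v where v: "asg A v" "map v [0..<length (as @ [funs A f as])] = as @ [funs A f as]"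
    using obtain_asg_prefix[of A "as @ [funs A f as]"] as by auto
  then have v': "map v [0..<length as] = as" "v (length as) = funs A f as"
    by (simp_all add: upt_Suc_append del: upt_Suc)
  let ?\<phi> = "Eq (Fn f (map Var [0..<length as])) (Var (length as)) :: ('f,'r) fm"
  have "wf_fm L ?\<phi>" "sat A v ?\<phi>" using as v' by (simp_all add: list_all_iff)
  then have "sat B (h \<circ> v) ?\<phi>" by (intro hom_sat_atomic[OF h _ _ v(1)]) (simp_all add: list_all_iff)
  moreover have "map (h \<circ> v) [0..<length as] = map h as" using v' by (metis map_map)
  ultimately show ?thesis using v' by simp
qed

lemma eval_commute:
  assumes funs_h: "\<forall>f as. length as = farity L f \<and> set as \<subseteq> Dom A \<longrightarrow> h (funs A f as) = funs B f (map h as)"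
    and A: "is_struct L A" and v: "asg A v" and t: "wf_trm L t"
  shows "h (eval A v t) = eval B (h \<circ> v) t"
  using t
proof (induction t)
  case (Fn f ts)
  then have "set (map (eval A v) ts) \<subseteq> Dom A"
    using eval_in_Dom[OF A v] by (auto simp: list_all_iff)
  then have "h (eval A v (Fn f ts)) = funs B f (map h (map (eval A v) ts))"
    using funs_h Fn.prems by simp
  also have "map h (map (eval A v) ts) = map (eval B (h \<circ> v)) ts"
    using Fn by (auto simp: list_all_iff comp_def)
  finally show ?case by (simp add: comp_def)
qed simp

lemma star_hom_embedding_reduct:
  fixes L :: "('f,'r) lang"
  assumes A: "is_model (star_lang L) (star_theory L T) A"
    and B: "is_model (star_lang L) (star_theory L T) B"
    and h: "hom (star_lang L) A B h"
  shows "embedding L (reduct A) (reduct B) h"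
proof -
  have ne: "Dom A \<noteq> {}" using is_model_Dom_nonempty[OF A] .
  have into: "\<forall>a\<in>Dom A. h a \<in> Dom B" using h by (simp add: hom_def)
  have "inj_on h (Dom A)"
  proof (rule inj_onI, rule ccontr)
    fix a b assume ab: "a \<in> Dom A" "b \<in> Dom A" "h a = h b" "a \<noteq> b"
    then have "rels A StarEq [a, b]" using star_model_rels_StarEq[OF A] by simp
    then have "rels B StarEq [h a, h b]" using hom_rels[OF h ne, of "[a, b]"] ab(1,2) by simp
    then show False using star_model_rels_StarEq[OF B, of "h a" "h b"] into ab by simp
  qed
  moreover have "\<forall>f as. length as = farity L f \<and> set as \<subseteq> Dom A \<longrightarrow>
      h (funs A f as) = funs B f (map h as)"
    using hom_funs[OF h] A by (simp add: is_model_def)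
  moreover have "rels A (Orig R) as \<longleftrightarrow> rels B (Orig R) (map h as)"
    if as: "length as = rarity L R" "set as \<subseteq> Dom A" for R as
  proof
    assume "rels A (Orig R) as"
    then show "rels B (Orig R) (map h as)" using hom_rels[OF h ne, of as "Orig R"] as by simp
  next
    assume B_rel: "rels B (Orig R) (map h as)"
    have "set (map h as) \<subseteq> Dom B" using as into by auto
    then have "\<not> rels B (Star R) (map h as)"
      using star_model_rels_Star[OF B, of "map h as" R] as B_rel by simp
    then have "\<not> rels A (Star R) as" using hom_rels[OF h ne, of as "Star R"] as by auto
    then show "rels A (Orig R) as" using star_model_rels_Star[OF A] as by blast
  qed
  ultimately show ?thesis unfolding embedding_def using into by simp
qed

lemma embedding_rels_star_expansion:
  fixes L :: "('f,'r) lang"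
  assumes e: "embedding L A B h"
    and as: "length as = rarity (star_lang L) S" "set as \<subseteq> Dom A"
    and "rels (star_expansion A) S as"
  shows "rels (star_expansion B) S (map h as)"
proof (cases S)
  case StarEq
  then obtain a b where "as = [a, b]" using as(1) by (auto simp: length_2_conv)
  then show ?thesis
    using StarEq as(2) assms(4) e by (auto simp: embedding_def dest: inj_onD)
qed (use as assms(4) e in \<open>auto simp: embedding_def\<close>)

lemma embedding_hom_star_expansion:
  fixes L :: "('f,'r) lang"
  assumes A: "is_struct L A" and e: "embedding L A B h"
  shows "hom (star_lang L) (star_expansion A) (star_expansion B) h"
  unfolding hom_def
proof (intro conjI allI impI)
  show "\<forall>a\<in>Dom (star_expansion A). h a \<in> Dom (star_expansion B)"
    using e by (simp add: embedding_def)
  fix \<phi> :: "('f,'r starred) fm" and v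
  assume \<phi>: "wf_fm (star_lang L) \<phi> \<and> is_atomic \<phi> \<and> asg (star_expansion A) v \<and> sat (star_expansion A) v \<phi>"
  then have v: "asg A v" by simp
  have eval_h: "h (eval A v t) = eval B (h \<circ> v) t" if "wf_trm L t" for t
    using e A v that unfolding embedding_def by (blast intro: eval_commute)
  show "sat (star_expansion B) (h \<circ> v) \<phi>"
  proof (cases \<phi>)
    case (Rel S ts)
    have map_h: "map (eval B (h \<circ> v)) ts = map h (map (eval A v) ts)"
      using \<phi> Rel eval_h by auto
    have "set (map (eval A v) ts) \<subseteq> Dom A" using \<phi> Rel eval_in_Dom[OF A v] by auto
    then have "rels (star_expansion B) S (map h (map (eval A v) ts))"
      using \<phi> Rel embedding_rels_star_expansion[OF e, of "map (eval A v) ts" S] by simp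
    then show ?thesis unfolding Rel sat.simps eval_star_expansion map_h .
  next
    case (Eq s t)
    then show ?thesis using \<phi> eval_h[of s] eval_h[of t] by auto
  qed (use \<phi> in auto)
qed

section \<open>Translations between \<open>L\<close>- and \<open>L\<^sup>*\<close>-formulas\<close>

fun unstar :: "('f,'r starred) fm \<Rightarrow> ('f,'r) fm" where
  "unstar FT = FT"
| "unstar FF = FF"
| "unstar (Rel (Orig R) ts) = Rel R ts"
| "unstar (Rel (Star R) ts) = Neg (Rel R ts)"
| "unstar (Rel StarEq ts) = Neg (Eq (ts ! 0) (ts ! 1))"
| "unstar (Eq s t) = Eq s t"
| "unstar (Neg \<phi>) = Neg (unstar \<phi>)"
| "unstar (Conj \<phi> \<psi>) = Conj (unstar \<phi>) (unstar \<psi>)"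
| "unstar (Disj \<phi> \<psi>) = Disj (unstar \<phi>) (unstar \<psi>)"
| "unstar (Ex x \<phi>) = Ex x (unstar \<phi>)"
| "unstar (All x \<phi>) = All x (unstar \<phi>)"

lemma sat_unstar:
  fixes L :: "('f,'r) lang"
  assumes B: "is_model (star_lang L) (star_theory L T) B"
  shows "asg B w \<Longrightarrow> wf_fm (star_lang L) \<phi> \<Longrightarrow> sat (reduct B) w (unstar \<phi>) \<longleftrightarrow> sat B w \<phi>"
proof (induction \<phi> arbitrary: w)
  case (Rel S ts)
  have "is_struct L (reduct B)" using B by (simp add: is_model_def)
  then have as: "set (map (eval B w) ts) \<subseteq> Dom B" using Rel eval_in_Dom[of L "reduct B" w] by auto
  show ?case
  proof (cases S)
    case (Star R)
    then show ?thesis using Rel star_model_rels_Star[OF B, of "map (eval B w) ts" R] as by simp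
  next
    case StarEq
    then obtain s t where "ts = [s, t]" using Rel by (auto simp: length_2_conv)
    then show ?thesis using StarEq as star_model_rels_StarEq[OF B, of "eval B w s" "eval B w t"] by simp
  qed simp
qed (auto intro: asg_fun_upd)

lemma wf_fm_unstar: "wf_fm (star_lang L) \<phi> \<Longrightarrow> wf_fm L (unstar \<phi>)"
proof (induction \<phi>)
  case (Rel S ts)
  then show ?case by (cases S) (auto simp: length_2_conv)
qed auto

lemma qfree_unstar: "qfree \<phi> \<Longrightarrow> qfree (unstar \<phi>)"
proof (induction \<phi>)
  case (Rel S ts)
  then show ?case by (cases S) auto
qed auto

lemma unstar_Exs: "unstar (Exs xs \<phi>) = Exs xs (unstar \<phi>)"
  by (induction xs) (auto simp: Exs_def)

lemma existential_unstar: "pos_existential \<phi> \<Longrightarrow> existential (unstar \<phi>)"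
  unfolding pos_existential_def existential_def
  using unstar_Exs qfree_unstar pos_qfree_imp_qfree by metis

text \<open>Negation normal form, with negated atoms replaced by their starred versions.\<close>

fun star_pos :: "('f,'r) fm \<Rightarrow> ('f,'r starred) fm"
  and star_neg :: "('f,'r) fm \<Rightarrow> ('f,'r starred) fm" where
  "star_pos FT = FT"
| "star_pos FF = FF"
| "star_pos (Rel R ts) = Rel (Orig R) ts"
| "star_pos (Eq s t) = Eq s t"
| "star_pos (Neg \<phi>) = star_neg \<phi>"
| "star_pos (Conj \<phi> \<psi>) = Conj (star_pos \<phi>) (star_pos \<psi>)"
| "star_pos (Disj \<phi> \<psi>) = Disj (star_pos \<phi>) (star_pos \<psi>)"
| "star_pos (Ex x \<phi>) = Ex x (star_pos \<phi>)"
| "star_pos (All x \<phi>) = All x (star_pos \<phi>)"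
| "star_neg FT = FF"
| "star_neg FF = FT"
| "star_neg (Rel R ts) = Rel (Star R) ts"
| "star_neg (Eq s t) = Rel StarEq [s, t]"
| "star_neg (Neg \<phi>) = star_pos \<phi>"
| "star_neg (Conj \<phi> \<psi>) = Disj (star_neg \<phi>) (star_neg \<psi>)"
| "star_neg (Disj \<phi> \<psi>) = Conj (star_neg \<phi>) (star_neg \<psi>)"
| "star_neg (Ex x \<phi>) = All x (star_neg \<phi>)"
| "star_neg (All x \<phi>) = Ex x (star_neg \<phi>)"

lemma sat_star_pos_neg:
  "(sat (star_expansion A) v (star_pos \<phi>) \<longleftrightarrow> sat A v \<phi>) \<and>
   (sat (star_expansion A) v (star_neg \<phi>) \<longleftrightarrow> \<not> sat A v \<phi>)"
  by (induction \<phi> arbitrary: v) auto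

lemma wf_fm_star_pos_neg:
  "wf_fm L \<phi> \<Longrightarrow> wf_fm (star_lang L) (star_pos \<phi>) \<and> wf_fm (star_lang L) (star_neg \<phi>)"
  by (induction \<phi>) auto

lemma pos_qfree_star_pos_neg: "qfree \<phi> \<Longrightarrow> pos_qfree (star_pos \<phi>) \<and> pos_qfree (star_neg \<phi>)"
  by (induction \<phi>) auto

lemma star_pos_Exs: "star_pos (Exs xs \<phi>) = Exs xs (star_pos \<phi>)"
  by (induction xs) (auto simp: Exs_def)

lemma pos_existential_star_pos: "existential \<phi> \<Longrightarrow> pos_existential (star_pos \<phi>)"
  unfolding pos_existential_def existential_def
  using star_pos_Exs pos_qfree_star_pos_neg by metis

section \<open>Model completeness and positive model completeness\<close>

lemma model_complete_imp_pos_model_complete_star: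
  fixes L :: "('f,'r) lang"
  assumes mc: "model_complete L T TYPE('a)"
  shows "pos_model_complete (star_lang L) (star_theory L T) TYPE('a)"
  unfolding pos_model_complete_def
proof (intro allI impI)
  fix A B :: "('a,'f,'r starred) struc" and h
  assume "is_model (star_lang L) (star_theory L T) A \<and> is_model (star_lang L) (star_theory L T) B
    \<and> hom (star_lang L) A B h"
  then have A: "is_model (star_lang L) (star_theory L T) A"
    and B: "is_model (star_lang L) (star_theory L T) B" and h: "hom (star_lang L) A B h" by auto
  have ec: "ec_embedding L (reduct A) (reduct B) h"
    using mc star_hom_embedding_reduct[OF A B h] is_model_reduct[OF A] is_model_reduct[OF B]
    unfolding model_complete_def by blast
  show "immersion (star_lang L) A B h"
    unfolding immersion_def
  proof (intro conjI h allI impI)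
    fix \<phi> v assume \<phi>: "wf_fm (star_lang L) \<phi> \<and> pos_existential \<phi> \<and> asg A v \<and> sat B (h \<circ> v) \<phi>"
    then have "sat (reduct B) (h \<circ> v) (unstar \<phi>)"
      using sat_unstar[OF B hom_asg[OF h]] by blast
    moreover have "wf_fm L (unstar \<phi>)" "existential (unstar \<phi>)"
      using \<phi> wf_fm_unstar existential_unstar by blast+
    ultimately have "sat (reduct A) v (unstar \<phi>)"
      using ec \<phi> unfolding ec_embedding_def by simp
    then show "sat A v \<phi>" using sat_unstar[OF A] \<phi> by blast
  qed
qed

lemma pos_model_complete_star_imp_model_complete:
  fixes L :: "('f,'r) lang"
  assumes pmc: "pos_model_complete (star_lang L) (star_theory L T) TYPE('a)"
  shows "model_complete L T TYPE('a)"
  unfolding model_complete_def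
proof (intro allI impI)
  fix A B :: "('a,'f,'r) struc" and h
  assume "is_model L T A \<and> is_model L T B \<and> embedding L A B h"
  then have A: "is_model L T A" and B: "is_model L T B" and e: "embedding L A B h" by auto
  have im: "immersion (star_lang L) (star_expansion A) (star_expansion B) h"
    using pmc embedding_hom_star_expansion[OF _ e] A is_model_star_expansion[OF A]
      is_model_star_expansion[OF B]
    unfolding pos_model_complete_def is_model_def[of L T A] by blast
  show "ec_embedding L A B h"
    unfolding ec_embedding_def
  proof (intro conjI e allI impI)
    fix \<phi> v assume \<phi>: "wf_fm L \<phi> \<and> existential \<phi> \<and> asg A v \<and> sat B (h \<circ> v) \<phi>"
    then have "sat (star_expansion A) v (star_pos \<phi>)"
      using im pos_existential_star_pos wf_fm_star_pos_neg sat_star_pos_neg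
      unfolding immersion_def by (metis asg_star_expansion)
    then show "sat A v \<phi>" using sat_star_pos_neg by blast
  qed
qed

section \<open>Positive model completeness and geometric completeness\<close>

fun star_complement :: "('f,'r starred) fm \<Rightarrow> ('f,'r starred) fm" where
  "star_complement (Rel (Orig R) ts) = Rel (Star R) ts"
| "star_complement (Rel (Star R) ts) = Rel (Orig R) ts"
| "star_complement (Rel StarEq ts) = Eq (ts ! 0) (ts ! 1)"
| "star_complement (Eq s t) = Rel StarEq [s, t]"
| "star_complement _ = FT"

definition star_falsum :: "('f,'r starred) fm" where
  "star_falsum = Rel StarEq [Var 0, Var 0]"

lemma pos_qfree_if_atomic: "is_atomic \<phi> \<Longrightarrow> pos_qfree \<phi>"
  by (cases \<phi>) auto

lemma star_complement_atomic:
  "wf_fm (star_lang L) \<psi> \<Longrightarrow> is_atomic \<psi> \<Longrightarrow>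
    wf_fm (star_lang L) (star_complement \<psi>) \<and> is_atomic (star_complement \<psi>)"
proof (induction \<psi> rule: star_complement.induct)
  case (3 ts)
  then show ?case by (auto simp: length_2_conv)
qed auto

lemma sat_star_complement:
  fixes L :: "('f,'r) lang"
  assumes B: "is_model (star_lang L) (star_theory L T) B" and w: "asg B w"
    and \<psi>: "wf_fm (star_lang L) \<psi>" "is_atomic \<psi>"
  shows "sat B w (star_complement \<psi>) \<longleftrightarrow> \<not> sat B w \<psi>"
proof -
  have "is_struct L (reduct B)" using B by (simp add: is_model_def)
  then have eval_B: "eval B w t \<in> Dom B" if "wf_trm L t" for t
    using eval_in_Dom[of L "reduct B" w t] w that by simp
  show ?thesis
  proof (cases \<psi>)
    case (Rel S ts)
    have as: "set (map (eval B w) ts) \<subseteq> Dom B" using \<psi> Rel eval_B by auto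
    show ?thesis
    proof (cases S)
      case StarEq
      then obtain s t where "ts = [s, t]" using \<psi> Rel by (auto simp: length_2_conv)
      then show ?thesis
        using Rel StarEq as star_model_rels_StarEq[OF B, of "eval B w s" "eval B w t"] by auto
    qed (use \<psi> Rel as star_model_rels_Star[OF B, of "map (eval B w) ts"] in auto)
  next
    case (Eq s t)
    then show ?thesis
      using \<psi> eval_B star_model_rels_StarEq[OF B, of "eval B w s" "eval B w t"] by auto
  qed (use \<psi> in auto)
qed

lemma not_sat_star_falsum:
  fixes L :: "('f,'r) lang"
  assumes "is_model (star_lang L) (star_theory L T) B" "asg B w"
  shows "\<not> sat B w star_falsum"
  using star_model_rels_StarEq[OF assms(1), of "w 0" "w 0"] assms(2)
  by (simp add: star_falsum_def asg_def)

lemma sat_sequent_iff_no_counterexample: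
  fixes L :: "('f,'r) lang"
  assumes B: "is_model (star_lang L) (star_theory L T) B" and v: "asg B v"
    and \<psi>: "wf_fm (star_lang L) \<psi>" "is_atomic \<psi>"
  shows "sat B v (Alls ys (Imp (Conjs \<Phi>) \<psi>)) \<longleftrightarrow>
    \<not> sat B v (Exs ys (Conj (Conjs \<Phi>) (star_complement \<psi>)))"
  unfolding sat_Alls sat_Exs
  using sat_star_complement[OF B asg_variant_on[OF v] \<psi>] by auto

fun dnf :: "('f,'r) fm \<Rightarrow> ('f,'r) fm list list" where
  "dnf FT = [[]]"
| "dnf FF = []"
| "dnf (Rel R ts) = [[Rel R ts]]"
| "dnf (Eq s t) = [[Eq s t]]"
| "dnf (Conj \<phi> \<psi>) = concat (map (\<lambda>c. map (\<lambda>d. c @ d) (dnf \<psi>)) (dnf \<phi>))"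
| "dnf (Disj \<phi> \<psi>) = dnf \<phi> @ dnf \<psi>"
| "dnf (Neg \<phi>) = []"
| "dnf (Ex x \<phi>) = []"
| "dnf (All x \<phi>) = []"

lemma sat_dnf: "pos_qfree \<phi> \<Longrightarrow> sat A w \<phi> \<longleftrightarrow> (\<exists>c\<in>set (dnf \<phi>). \<forall>\<chi>\<in>set c. sat A w \<chi>)"
proof (induction \<phi>)
  case (Conj \<phi> \<psi>)
  then show ?case by (auto 0 4)
qed auto

lemma dnf_atomic:
  "pos_qfree \<phi> \<Longrightarrow> wf_fm L \<phi> \<Longrightarrow> c \<in> set (dnf \<phi>) \<Longrightarrow> \<chi> \<in> set c \<Longrightarrow> wf_fm L \<chi> \<and> is_atomic \<chi>"
  by (induction \<phi> arbitrary: c) auto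

lemma not_sat_Exs_iff_sequents:
  fixes L :: "('f,'r) lang"
  assumes B: "is_model (star_lang L) (star_theory L T) B" and v: "asg B v"
    and \<psi>: "pos_qfree \<psi>"
  shows "\<not> sat B v (Exs xs \<psi>) \<longleftrightarrow>
    (\<forall>c\<in>set (dnf \<psi>). sat B v (Alls xs (Imp (Conjs c) star_falsum)))"
  unfolding sat_Alls sat_Exs sat_dnf[OF \<psi>]
  using not_sat_star_falsum[OF B asg_variant_on[OF v]] by auto

lemma pos_model_complete_star_imp_geom_complete:
  fixes L :: "('f,'r) lang"
  assumes pmc: "pos_model_complete (star_lang L) (star_theory L T) TYPE('a)"
  shows "geom_complete (star_lang L) (star_theory L T) TYPE('a)"
  unfolding geom_complete_def
proof (intro allI impI)
  fix A B :: "('a,'f,'r starred) struc" and h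
  assume models: "is_model (star_lang L) (star_theory L T) A \<and> is_model (star_lang L) (star_theory L T) B
    \<and> hom (star_lang L) A B h"
  then have A: "is_model (star_lang L) (star_theory L T) A"
    and B: "is_model (star_lang L) (star_theory L T) B" and h: "hom (star_lang L) A B h" by auto
  have im: "immersion (star_lang L) A B h" using pmc models unfolding pos_model_complete_def by blast
  show "geom_closed (star_lang L) A B h"
    unfolding geom_closed_def
  proof (intro conjI h allI impI)
    fix ys \<Phi> \<psi> v
    assume seq: "(\<forall>\<chi>\<in>set \<Phi>. wf_fm (star_lang L) \<chi> \<and> is_atomic \<chi>) \<and> wf_fm (star_lang L) \<psi> \<and>
      is_atomic \<psi> \<and> asg A v \<and> sat A v (Alls ys (Imp (Conjs \<Phi>) \<psi>))"
    let ?\<theta> = "Exs ys (Conj (Conjs \<Phi>) (star_complement \<psi>))"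
    have "pos_qfree (Conjs \<Phi>)" using seq pos_qfree_Conjs by blast
    then have "pos_existential ?\<theta>"
      using seq star_complement_atomic[of L \<psi>] pos_qfree_if_atomic
      unfolding pos_existential_def by (blast intro: pos_qfree.simps(5)[THEN iffD2])
    moreover have "wf_fm (star_lang L) ?\<theta>" using seq star_complement_atomic[of L \<psi>] by auto
    moreover have "\<not> sat A v ?\<theta>" using seq sat_sequent_iff_no_counterexample[OF A] by blast
    ultimately have "\<not> sat B (h \<circ> v) ?\<theta>" using im seq unfolding immersion_def by blast
    then show "sat B (h \<circ> v) (Alls ys (Imp (Conjs \<Phi>) \<psi>))"
      using seq sat_sequent_iff_no_counterexample[OF B hom_asg[OF h]] by blast
  qed
qed

lemma geom_complete_star_imp_pos_model_complete:
  fixes L :: "('f,'r) lang"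
  assumes gc: "geom_complete (star_lang L) (star_theory L T) TYPE('a)"
  shows "pos_model_complete (star_lang L) (star_theory L T) TYPE('a)"
  unfolding pos_model_complete_def
proof (intro allI impI)
  fix A B :: "('a,'f,'r starred) struc" and h
  assume models: "is_model (star_lang L) (star_theory L T) A \<and> is_model (star_lang L) (star_theory L T) B
    \<and> hom (star_lang L) A B h"
  then have A: "is_model (star_lang L) (star_theory L T) A"
    and B: "is_model (star_lang L) (star_theory L T) B" and h: "hom (star_lang L) A B h" by auto
  have gh: "geom_closed (star_lang L) A B h" using gc models unfolding geom_complete_def by blast
  have falsum: "wf_fm (star_lang L) star_falsum" "is_atomic star_falsum"
    by (simp_all add: star_falsum_def)
  show "immersion (star_lang L) A B h"
    unfolding immersion_def
  proof (intro conjI h allI impI)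
    fix \<phi> v assume \<phi>: "wf_fm (star_lang L) \<phi> \<and> pos_existential \<phi> \<and> asg A v \<and> sat B (h \<circ> v) \<phi>"
    then obtain xs \<psi> where \<psi>: "\<phi> = Exs xs \<psi>" "pos_qfree \<psi>" "wf_fm (star_lang L) \<psi>"
      unfolding pos_existential_def by auto
    show "sat A v \<phi>"
    proof (rule ccontr)
      assume "\<not> sat A v \<phi>"
      then have "\<forall>c\<in>set (dnf \<psi>). sat A v (Alls xs (Imp (Conjs c) star_falsum))"
        using not_sat_Exs_iff_sequents[OF A _ \<psi>(2)] \<phi> \<psi>(1) by blast
      then have "\<forall>c\<in>set (dnf \<psi>). sat B (h \<circ> v) (Alls xs (Imp (Conjs c) star_falsum))"
        using gh falsum \<phi> dnf_atomic[OF \<psi>(2,3)] unfolding geom_closed_def by blast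
      then show False
        using not_sat_Exs_iff_sequents[OF B hom_asg[OF h] \<psi>(2)] \<phi> \<psi>(1) by blast
    qed
  qed
qed

theorem corollary4p22:
  fixes L :: "('f,'r) lang" and T :: "('f,'r) fm set"
  assumes "is_theory L T"
  shows "(model_complete L T TYPE('a) \<longleftrightarrow>
            pos_model_complete (star_lang L) (star_theory L T) TYPE('a))
       \<and> (pos_model_complete (star_lang L) (star_theory L T) TYPE('a) \<longleftrightarrow>
            geom_complete (star_lang L) (star_theory L T) TYPE('a))"
  using model_complete_imp_pos_model_complete_star pos_model_complete_star_imp_model_complete
    pos_model_complete_star_imp_geom_complete geom_complete_star_imp_pos_model_complete
  by blast

end
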